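(* Let $p,l$ be distinct odd primes and let $\Gamma=\psi(\tilde\Gamma)$ be the group described in the context. If $\Gamma_1$ and $\Gamma_2$ are maximal abelian subgroups of $\Gamma$ with $\Gamma_1\neq\Gamma_2$, then $\Gamma_1\cap\Gamma_2=\{1\}$.
   Context: Let $p,l$ be distinct odd primes. Let $\mathbb H(\mathbb Z)$ be the ring of quaternions $x=x_0+x_1i+x_2j+x_3k$ with $x_0,\dots,x_3\in\mathbb Z$, where $i^2=j^2=k^2=-1$, $ij=-ji=k$; write $|x|^2=x_0^2+x_1^2+x_2^2+x_3^2$. Fix $c_p,d_p\in\mathbb Q_p$ with $c_p^2+d_p^2+1=0$ and $c_l,d_l\in\mathbb Q_l$ with $c_l^2+d_l^2+1=0$. Define $\psi:\mathbb H(\mathbb Z)\setminus\{0\}\to G:=PGL_2(\mathbb Q_p)\times PGL_2(\mathbb Q_l)$ by sending $x$ to the class of the pair $\left(\begin{pmatrix} x_0+x_1c_p+x_3d_p & -x_1d_p+x_2+x_3c_p\\ -x_1d_p-x_2+x_3c_p & x_0-x_1c_p-x_3d_p\end{pmatrix},\begin{pmatrix} x_0+x_1c_l+x_3d_l & -x_1d_l+x_2+x_3c_l\\ -x_1d_l-x_2+x_3c_l & x_0-x_1c_l-x_3d_l\end{pmatrix}\right)$. Let $\tilde\Gamma$ be the set of $x\in\mathbb H(\mathbb Z)$ such that $|x|^2=p^rl^s$ for some integers $r,s\ge 0$, and such that $x_0$ is odd and $x_1,x_2,x_3$ are even if $|x|^2\equiv 1\pmod 4$, while $x_1$ is even and $x_0,x_2,x_3$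 are odd if $|x|^2\equiv 3\pmod 4$. Then $\Gamma=\psi(\tilde\Gamma)$ is a torsion-free cocompact lattice in $G$. *)

theory Defs
  imports "HOL-Analysis.Determinants" "HOL-Algebra.Group" "HOL-Computational_Algebra.Primes"
begin

text \<open>Integral Hamilton quaternions x0 + x1 i + x2 j + x3 k as integer 4-tuples.\<close>
type_synonym zquat = "int \<times> int \<times> int \<times> int"

definition qnorm :: "zquat \<Rightarrow> int" where
  "qnorm x = (case x of (x0, x1, x2, x3) \<Rightarrow> x0^2 + x1^2 + x2^2 + x3^2)"

definition Gamma_tilde :: "nat \<Rightarrow> nat \<Rightarrow> zquat set" where
  "Gamma_tilde p l = {(x0, x1, x2, x3).
     (\<exists>r s::nat. x0^2 + x1^2 + x2^2 + x3^2 = int p ^ r * int l ^ s) \<and>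
     ((x0^2 + x1^2 + x2^2 + x3^2) mod 4 = 1 \<longrightarrow> odd x0 \<and> even x1 \<and> even x2 \<and> even x3) \<and>
     ((x0^2 + x1^2 + x2^2 + x3^2) mod 4 = 3 \<longrightarrow> even x1 \<and> odd x0 \<and> odd x2 \<and> odd x3)}"

definition mat2 :: "'a \<Rightarrow> 'a \<Rightarrow> 'a \<Rightarrow> 'a \<Rightarrow> 'a ^ 2 ^ 2" where
  "mat2 a b c d = (\<chi> i j. if i = 1 then (if j = 1 then a else b) else (if j = 1 then c else d))"

text \<open>The matrix attached to a quaternion, given c, d with c^2 + d^2 + 1 = 0.\<close>
definition qmat :: "'a::field \<Rightarrow> 'a \<Rightarrow> zquat \<Rightarrow> 'a ^ 2 ^ 2" where
  "qmat c d x = (case x of (x0, x1, x2, x3) \<Rightarrow>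
     mat2 (of_int x0 + of_int x1 * c + of_int x3 * d)
          (- of_int x1 * d + of_int x2 + of_int x3 * c)
          (- of_int x1 * d - of_int x2 + of_int x3 * c)
          (of_int x0 - of_int x1 * c - of_int x3 * d))"

text \<open>Class of an invertible matrix in PGL_2: the set of its nonzero scalar multiples.\<close>
definition pgl_class :: "'a::field ^ 2 ^ 2 \<Rightarrow> ('a ^ 2 ^ 2) set" where
  "pgl_class A = {(\<chi> i j. t * A $ i $ j) | t. t \<noteq> 0}"

definition PGL2 :: "('a::field ^ 2 ^ 2) set monoid" where
  "PGL2 = \<lparr> carrier = {pgl_class A | A. det A \<noteq> 0},
            mult = (\<lambda>X Y. {a ** b | a b. a \<in> X \<and> b \<in> Y}),
            one = pgl_class (mat 1) \<rparr>"

definition Gpl :: "(('a::field ^ 2 ^ 2) set \<times> ('b::field ^ 2 ^ 2) set) monoid" where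
  "Gpl = PGL2 \<times>\<times> PGL2"

definition psi :: "'a::field \<Rightarrow> 'a \<Rightarrow> 'b::field \<Rightarrow> 'b \<Rightarrow> zquat
                    \<Rightarrow> ('a ^ 2 ^ 2) set \<times> ('b ^ 2 ^ 2) set" where
  "psi cp dp cl dl x = (pgl_class (qmat cp dp x), pgl_class (qmat cl dl x))"

definition Gamma :: "nat \<Rightarrow> nat \<Rightarrow> 'a::field \<Rightarrow> 'a \<Rightarrow> 'b::field \<Rightarrow> 'b
                     \<Rightarrow> (('a ^ 2 ^ 2) set \<times> ('b ^ 2 ^ 2) set) set" where
  "Gamma p l cp dp cl dl = psi cp dp cl dl ` Gamma_tilde p l"

definition GammaGrp :: "nat \<Rightarrow> nat \<Rightarrow> 'a::field \<Rightarrow> 'a \<Rightarrow> 'b::field \<Rightarrow> 'b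
                     \<Rightarrow> (('a ^ 2 ^ 2) set \<times> ('b ^ 2 ^ 2) set) monoid" where
  "GammaGrp p l cp dp cl dl = Gpl \<lparr> carrier := Gamma p l cp dp cl dl \<rparr>"

definition abelian_subgroup :: "'g set \<Rightarrow> ('g, 'm) monoid_scheme \<Rightarrow> bool" where
  "abelian_subgroup H G \<longleftrightarrow> subgroup H G \<and>
     (\<forall>x\<in>H. \<forall>y\<in>H. x \<otimes>\<^bsub>G\<^esub> y = y \<otimes>\<^bsub>G\<^esub> x)"

definition maximal_abelian_subgroup :: "'g set \<Rightarrow> ('g, 'm) monoid_scheme \<Rightarrow> bool" where
  "maximal_abelian_subgroup H G \<longleftrightarrow> abelian_subgroup H G \<and>
     (\<forall>K. abelian_subgroup K G \<and> H \<subseteq> K \<longrightarrow> K = H)"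

end

theory Submission
  imports Defs "HOL-Number_Theory.Cong"
begin

(* Every element of Gamma is the image of an integral quaternion x with odd real part and
   nonzero norm, and psi is multiplicative.  If psi x and psi y commute, then xy and yx have
   proportional matrices; comparing determinants (= norms) the factor is +1 or -1, and
   yx = -xy is impossible because it forces Re y = 0.  So commuting in Gamma means commuting
   as quaternions, i.e. having parallel imaginary parts.  Parallelism to a fixed nonzero vector
   is transitive, hence the centralizer of every nontrivial element of Gamma is abelian, and in
   such a group a maximal abelian subgroup containing g is the centralizer of g.  Only the
   oddness of p and l is used: it makes all norms odd, and for odd norms the congruence
   conditions mod 4 amount to a parity condition that is preserved by multiplication. *)

section \<open>Centralizers and maximal abelian subgroups\<close>

definition centralizer :: "('g, 'm) monoid_scheme \<Rightarrow> 'g \<Rightarrow> 'g set" where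
  "centralizer G g = {h \<in> carrier G. h \<otimes>\<^bsub>G\<^esub> g = g \<otimes>\<^bsub>G\<^esub> h}"

lemma (in group) subgroup_centralizer:
  assumes g: "g \<in> carrier G"
  shows "subgroup (centralizer G g) G"
proof (rule subgroupI)
  show "centralizer G g \<subseteq> carrier G" "centralizer G g \<noteq> {}"
    using g by (auto simp: centralizer_def)
next
  fix a assume "a \<in> centralizer G g"
  then have a: "a \<in> carrier G" "a \<otimes> g = g \<otimes> a" by (auto simp: centralizer_def)
  have "inv a \<otimes> g = inv a \<otimes> (g \<otimes> a) \<otimes> inv a"
    using a g by (simp add: m_assoc)
  also have "\<dots> = g \<otimes> inv a"
    using a g by (simp flip: a(2) add: m_assoc[symmetric])
  finally show "inv a \<in> centralizer G g" using a by (simp add: centralizer_def)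
next
  fix a b assume "a \<in> centralizer G g" "b \<in> centralizer G g"
  then have a: "a \<in> carrier G" "a \<otimes> g = g \<otimes> a" and b: "b \<in> carrier G" "b \<otimes> g = g \<otimes> b"
    by (auto simp: centralizer_def)
  have "a \<otimes> b \<otimes> g = a \<otimes> (g \<otimes> b)"
    using a(1) b(1) g by (simp add: m_assoc b(2))
  also have "\<dots> = a \<otimes> g \<otimes> b"
    using a(1) b(1) g by (simp add: m_assoc)
  also have "\<dots> = g \<otimes> a \<otimes> b"
    by (simp only: a(2))
  also have "\<dots> = g \<otimes> (a \<otimes> b)"
    using a(1) b(1) g by (simp add: m_assoc)
  finally show "a \<otimes> b \<in> centralizer G g" using a b by (simp add: centralizer_def)
qed

lemma (in group) maximal_abelian_subgroup_eq_centralizer: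
  assumes H: "maximal_abelian_subgroup H G" and g: "g \<in> H"
    and abelian: "abelian_subgroup (centralizer G g) G"
  shows "H = centralizer G g"
proof -
  have "H \<subseteq> centralizer G g"
    using H g subgroup.subset
    by (fastforce simp: maximal_abelian_subgroup_def abelian_subgroup_def centralizer_def)
  then show ?thesis
    using H abelian unfolding maximal_abelian_subgroup_def by blast
qed

lemma (in group) maximal_abelian_subgroups_inter_trivial:
  assumes centralizers: "\<And>g. g \<in> carrier G \<Longrightarrow> g \<noteq> \<one> \<Longrightarrow> abelian_subgroup (centralizer G g) G"
    and H1: "maximal_abelian_subgroup H1 G" and H2: "maximal_abelian_subgroup H2 G"
    and "H1 \<noteq> H2"
  shows "H1 \<inter> H2 = {\<one>}"
proof -
  have sub: "subgroup H1 G" "subgroup H2 G"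
    using H1 H2 by (simp_all add: maximal_abelian_subgroup_def abelian_subgroup_def)
  have "g = \<one>" if g: "g \<in> H1 \<inter> H2" for g
  proof (rule ccontr)
    assume "g \<noteq> \<one>"
    then have "abelian_subgroup (centralizer G g) G"
      using g sub subgroup.subset by (blast intro: centralizers)
    then have "H1 = centralizer G g" "H2 = centralizer G g"
      using g H1 H2 maximal_abelian_subgroup_eq_centralizer by blast+
    with \<open>H1 \<noteq> H2\<close> show False by simp
  qed
  then show ?thesis using sub subgroup.one_closed by blast
qed

section \<open>Integral quaternions\<close>

definition qmul :: "zquat \<Rightarrow> zquat \<Rightarrow> zquat" where
  "qmul x y = (case x of (a0, a1, a2, a3) \<Rightarrow> case y of (b0, b1, b2, b3) \<Rightarrow>
     (a0*b0 - a1*b1 - a2*b2 - a3*b3, a0*b1 + a1*b0 + a2*b3 - a3*b2,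
      a0*b2 - a1*b3 + a2*b0 + a3*b1, a0*b3 + a1*b2 - a2*b1 + a3*b0))"

definition qconj :: "zquat \<Rightarrow> zquat" where
  "qconj x = (case x of (a0, a1, a2, a3) \<Rightarrow> (a0, -a1, -a2, -a3))"

definition qneg :: "zquat \<Rightarrow> zquat" where
  "qneg x = (case x of (a0, a1, a2, a3) \<Rightarrow> (-a0, -a1, -a2, -a3))"

lemma qmul_assoc: "qmul (qmul x y) z = qmul x (qmul y z)"
  by (cases x; cases y; cases z) (simp add: qmul_def algebra_simps)

lemma qmul_one_left: "qmul (1, 0, 0, 0) x = x"
  by (cases x) (simp add: qmul_def)

lemma qmul_qconj_left: "qmul (qconj x) x = (qnorm x, 0, 0, 0)"
  by (cases x) (simp add: qmul_def qconj_def qnorm_def power2_eq_square algebra_simps)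

lemma qnorm_qmul: "qnorm (qmul x y) = qnorm x * qnorm y"
  by (cases x; cases y) (simp add: qnorm_def qmul_def power2_eq_square algebra_simps)

lemma qnorm_qconj: "qnorm (qconj x) = qnorm x"
  by (cases x) (simp add: qnorm_def qconj_def)

lemma qmul_anticommute_imp_real_part_0:
  assumes anti: "qmul y x = qneg (qmul x y)" and "qnorm x \<noteq> 0"
  shows "fst y = 0"
proof -
  obtain x0 x1 x2 x3 where x: "x = (x0, x1, x2, x3)" by (cases x)
  obtain y0 y1 y2 y3 where y: "y = (y0, y1, y2, y3)" by (cases y)
  have E: "x0*y0 - x1*y1 - x2*y2 - x3*y3 = 0" "x0*y1 + y0*x1 = 0"
    "x0*y2 + y0*x2 = 0" "x0*y3 + y0*x3 = 0"
    using anti unfolding x y qmul_def qneg_def by (simp_all add: algebra_simps)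
  have "y0 * qnorm x = x0 * (x0*y0 - x1*y1 - x2*y2 - x3*y3) + x1 * (x0*y1 + y0*x1)
      + x2 * (x0*y2 + y0*x2) + x3 * (x0*y3 + y0*x3)"
    unfolding x qnorm_def by (simp add: algebra_simps power2_eq_square)
  then show ?thesis using E \<open>qnorm x \<noteq> 0\<close> y by simp
qed

definition parallel :: "int \<times> int \<times> int \<Rightarrow> int \<times> int \<times> int \<Rightarrow> bool" where
  "parallel a b = (case a of (a1, a2, a3) \<Rightarrow> case b of (b1, b2, b3) \<Rightarrow>
     a2*b3 = a3*b2 \<and> a3*b1 = a1*b3 \<and> a1*b2 = a2*b1)"

lemma qmul_commute_iff_parallel:
  "qmul (x0, x1, x2, x3) (y0, y1, y2, y3) = qmul (y0, y1, y2, y3) (x0, x1, x2, x3) \<longleftrightarrow>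
   parallel (x1, x2, x3) (y1, y2, y3)"
  by (auto simp: qmul_def parallel_def algebra_simps)

lemma parallel_trans:
  assumes "a \<noteq> (0, 0, 0)" and "parallel a b" and "parallel a c"
  shows "parallel b c"
proof -
  have first_coord: "parallel b c"
    if "a1 \<noteq> 0" "parallel (a1, a2, a3) b" "parallel (a1, a2, a3) c" for a1 a2 a3 b c
  proof -
    obtain b1 b2 b3 where b: "b = (b1, b2, b3)" by (cases b)
    obtain c1 c2 c3 where c: "c = (c1, c2, c3)" by (cases c)
    have "a2*b3 = a3*b2" "a3*b1 = a1*b3" "a1*b2 = a2*b1"
      "a2*c3 = a3*c2" "a3*c1 = a1*c3" "a1*c2 = a2*c1"
      using that(2,3) by (simp_all add: parallel_def b c)
    then have "a1 * (b2*c3 - b3*c2) = 0" "a1 * (b3*c1 - b1*c3) = 0" "a1 * (b1*c2 - b2*c1) = 0"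
      by algebra+
    then show ?thesis using \<open>a1 \<noteq> 0\<close> by (simp add: parallel_def b c)
  qed
  have rotate: "parallel (a1, a2, a3) (b1, b2, b3) \<longleftrightarrow> parallel (a2, a3, a1) (b2, b3, b1)"
    for a1 a2 a3 b1 b2 b3
    by (auto simp: parallel_def)
  obtain a1 a2 a3 where a: "a = (a1, a2, a3)" by (cases a)
  obtain b1 b2 b3 where b: "b = (b1, b2, b3)" by (cases b)
  obtain c1 c2 c3 where c: "c = (c1, c2, c3)" by (cases c)
  consider "a1 \<noteq> 0" | "a2 \<noteq> 0" | "a3 \<noteq> 0" using assms(1) a by auto
  then show ?thesis
    using first_coord[of a1 a2 a3] first_coord[of a2 a3 a1] first_coord[of a3 a1 a2]
      assms(2,3) rotate unfolding a b c by cases metis+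
qed

lemma qmul_commute_trans:
  assumes "(x1, x2, x3) \<noteq> (0, 0, 0)"
    and "qmul (x0, x1, x2, x3) y = qmul y (x0, x1, x2, x3)"
    and "qmul (x0, x1, x2, x3) z = qmul z (x0, x1, x2, x3)"
  shows "qmul y z = qmul z y"
proof -
  obtain y0 y1 y2 y3 where y: "y = (y0, y1, y2, y3)" by (cases y)
  obtain z0 z1 z2 z3 where z: "z = (z0, z1, z2, z3)" by (cases z)
  have "parallel (x1, x2, x3) (y1, y2, y3)" "parallel (x1, x2, x3) (z1, z2, z3)"
    using assms(2,3) unfolding y z qmul_commute_iff_parallel .
  then have "parallel (y1, y2, y3) (z1, z2, z3)"
    using assms(1) parallel_trans by blast
  then show ?thesis unfolding y z qmul_commute_iff_parallel .
qed

section \<open>The quaternion matrices\<close>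

lemma mat2_nth [simp]:
  "mat2 a b c d $ 1 $ 1 = a" "mat2 a b c d $ 1 $ 2 = b"
  "mat2 a b c d $ 2 $ 1 = c" "mat2 a b c d $ 2 $ 2 = d"
  by (simp_all add: mat2_def)

lemma mat2_eq_iff:
  "(A :: 'a^2^2) = B \<longleftrightarrow> A$1$1 = B$1$1 \<and> A$1$2 = B$1$2 \<and> A$2$1 = B$2$1 \<and> A$2$2 = B$2$2"
  by (auto simp: vec_eq_iff forall_2)

lemma mat2_mult:
  "mat2 a b c d ** mat2 a' b' c' d' =
   mat2 (a*a' + b*c') (a*b' + b*d') (c*a' + d*c') (c*b' + d*d' :: 'a::comm_ring_1)"
  by (simp add: mat2_eq_iff matrix_matrix_mult_def sum_2)

definition scale_mat :: "'a::field \<Rightarrow> 'a^2^2 \<Rightarrow> 'a^2^2" where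
  "scale_mat t A = (\<chi> i j. t * A $ i $ j)"

lemma scale_mat_1 [simp]: "scale_mat 1 A = A"
  by (simp add: scale_mat_def vec_eq_iff)

lemma scale_mat_scale_mat: "scale_mat s (scale_mat t A) = scale_mat (s * t) A"
  by (simp add: scale_mat_def vec_eq_iff mult_ac)

lemma scale_mat_mult: "scale_mat s A ** scale_mat t B = scale_mat (s * t) (A ** B)"
  by (simp add: scale_mat_def vec_eq_iff matrix_matrix_mult_def sum_distrib_left mult_ac)

lemma det_scale_mat: "det (scale_mat t A) = t^2 * det A"
  by (simp add: det_2 scale_mat_def power2_eq_square algebra_simps)

lemma pgl_class_eq: "pgl_class A = {scale_mat t A | t. t \<noteq> 0}"
  by (simp add: pgl_class_def scale_mat_def)

lemma pgl_class_self: "A \<in> pgl_class A"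
  unfolding pgl_class_eq by (auto intro!: exI[of _ 1])

lemma pgl_class_mult:
  "{a ** b | a b. a \<in> pgl_class A \<and> b \<in> pgl_class B} = pgl_class (A ** B)"
proof
  show "{a ** b | a b. a \<in> pgl_class A \<and> b \<in> pgl_class B} \<subseteq> pgl_class (A ** B)"
    by (auto simp: pgl_class_eq scale_mat_mult)
next
  show "pgl_class (A ** B) \<subseteq> {a ** b | a b. a \<in> pgl_class A \<and> b \<in> pgl_class B}"
  proof
    fix X assume "X \<in> pgl_class (A ** B)"
    then obtain t where "t \<noteq> 0" "X = scale_mat t (A ** B)"
      by (auto simp: pgl_class_eq)
    then have t: "t \<noteq> 0" "X = scale_mat t A ** B"
      using scale_mat_mult[of t A 1 B] by simp_all
    moreover have "scale_mat t A \<in> pgl_class A"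
      using t(1) unfolding pgl_class_eq by auto
    moreover note pgl_class_self[of B]
    ultimately show "X \<in> {a ** b | a b. a \<in> pgl_class A \<and> b \<in> pgl_class B}" by blast
  qed
qed

lemma pgl_class_scale_mat:
  assumes "t \<noteq> 0"
  shows "pgl_class (scale_mat t A) = pgl_class A"
proof (intro equalityI subsetI)
  fix X assume "X \<in> pgl_class (scale_mat t A)"
  then show "X \<in> pgl_class A"
    using assms by (auto simp: pgl_class_eq scale_mat_scale_mat)
next
  fix X assume "X \<in> pgl_class A"
  then obtain s where "s \<noteq> 0" "X = scale_mat (s / t) (scale_mat t A)"
    using assms by (auto simp: pgl_class_eq scale_mat_scale_mat)
  then show "X \<in> pgl_class (scale_mat t A)"
    using assms by (auto simp: pgl_class_eq)
qed

lemma pgl_class_eqD: "pgl_class A = pgl_class B \<Longrightarrow> \<exists>t. t \<noteq> 0 \<and> B = scale_mat t A"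
  using pgl_class_self[of B] by (auto simp: pgl_class_eq)

lemma qmat_qmul:
  fixes c d :: "'a::field"
  assumes "c^2 + d^2 + 1 = 0"
  shows "qmat c d (qmul x y) = qmat c d x ** qmat c d y"
proof -
  obtain x0 x1 x2 x3 where x: "x = (x0, x1, x2, x3)" by (cases x)
  obtain y0 y1 y2 y3 where y: "y = (y0, y1, y2, y3)" by (cases y)
  show ?thesis
    unfolding x y qmat_def qmul_def
    by (simp add: mat2_mult mat2_eq_iff) (use assms in algebra)
qed

lemma det_qmat:
  fixes c d :: "'a::field"
  assumes "c^2 + d^2 + 1 = 0"
  shows "det (qmat c d x) = of_int (qnorm x)"
proof -
  obtain x0 x1 x2 x3 where x: "x = (x0, x1, x2, x3)" by (cases x)
  show ?thesis
    unfolding x qmat_def qnorm_def by (simp add: det_2) (use assms in algebra)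
qed

lemma qmat_scalar: "qmat c d (n, 0, 0, 0) = scale_mat (of_int n) (mat 1)"
  by (simp add: qmat_def scale_mat_def mat2_def vec_eq_iff forall_2 mat_def)

lemma qmat_qneg: "qmat c d (qneg x) = scale_mat (-1) (qmat c d x)"
  by (cases x) (simp add: qmat_def qneg_def scale_mat_def mat2_eq_iff algebra_simps)

lemma qmat_coordinates:
  fixes c d :: "'a::field" and w x y z :: int
  assumes cd: "c^2 + d^2 + 1 = 0"
  defines "A \<equiv> qmat c d (w, x, y, z)"
  shows "2 * of_int w = A$1$1 + A$2$2"
    and "2 * of_int y = A$1$2 - A$2$1"
    and "2 * of_int x = d * (A$1$2 + A$2$1) - c * (A$1$1 - A$2$2)"
    and "2 * of_int z = - (d * (A$1$1 - A$2$2) + c * (A$1$2 + A$2$1))"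
  unfolding A_def qmat_def using cd by simp_all algebra+

lemma qmat_inj:
  fixes c d :: "'a::field_char_0"
  assumes "c^2 + d^2 + 1 = 0" and "qmat c d x = qmat c d y"
  shows "x = y"
proof -
  obtain x0 x1 x2 x3 where x: "x = (x0, x1, x2, x3)" by (cases x)
  obtain y0 y1 y2 y3 where y: "y = (y0, y1, y2, y3)" by (cases y)
  have "2 * (of_int x0 :: 'a) = 2 * of_int y0" "2 * (of_int x1 :: 'a) = 2 * of_int y1"
    "2 * (of_int x2 :: 'a) = 2 * of_int y2" "2 * (of_int x3 :: 'a) = 2 * of_int y3"
    using qmat_coordinates[OF assms(1), where w = x0 and x = x1 and y = x2 and z = x3]
      qmat_coordinates[OF assms(1), where w = y0 and x = y1 and y = y2 and z = y3]
      assms(2) unfolding x y by simp_all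
  then show ?thesis unfolding x y by simp
qed

lemma qmul_commute_of_pgl_class_eq:
  fixes c d :: "'a::field_char_0"
  assumes cd: "c^2 + d^2 + 1 = 0"
    and "qnorm x \<noteq> 0" "qnorm y \<noteq> 0" "fst y \<noteq> 0"
    and "pgl_class (qmat c d (qmul x y)) = pgl_class (qmat c d (qmul y x))"
  shows "qmul x y = qmul y x"
proof -
  obtain t where t: "t \<noteq> 0" "qmat c d (qmul y x) = scale_mat t (qmat c d (qmul x y))"
    using assms(5) pgl_class_eqD by blast
  have "of_int (qnorm (qmul y x)) = t^2 * (of_int (qnorm (qmul x y)) :: 'a)"
    using arg_cong[OF t(2), of det] by (simp add: det_scale_mat det_qmat[OF cd])
  then have "t^2 = 1"
    using assms(2,3) by (simp add: qnorm_qmul mult.commute[of "qnorm y"])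
  then consider "t = 1" | "t = -1" by (auto simp: power2_eq_1_iff)
  then show ?thesis
  proof cases
    case 1
    then show ?thesis using t qmat_inj[OF cd] by simp
  next
    case 2
    then have "qmul y x = qneg (qmul x y)"
      using t qmat_inj[OF cd] by (simp add: qmat_qneg)
    then show ?thesis using qmul_anticommute_imp_real_part_0 assms(2,4) by blast
  qed
qed

section \<open>The group Gamma\<close>

lemma power2_cong_mod4: "[(x::int)^2 = (if even x then 0 else 1)] (mod 4)"
proof (cases "even x")
  case True
  then obtain b where "x = 2*b" ..
  then have "x^2 = 4*b^2" by (simp add: power_mult_distrib)
  then show ?thesis using True by (simp add: cong_def)
next
  case False
  then obtain b where "x = 2*b + 1" using oddE by blast
  then have "x^2 - 1 = 4*(b^2 + b)" by (simp add: power2_eq_square algebra_simps)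
  then show ?thesis using False by (simp add: cong_iff_dvd_diff)
qed

definition admissible_parity :: "zquat \<Rightarrow> bool" where
  "admissible_parity x = (case x of (x0, x1, x2, x3) \<Rightarrow> odd x0 \<and> even x1 \<and> (even x2 \<longleftrightarrow> even x3))"

lemma sum_squares_mod4_conditions_iff:
  fixes x0 x1 x2 x3 :: int
  assumes "odd (x0^2 + x1^2 + x2^2 + x3^2)"
  shows "((x0^2 + x1^2 + x2^2 + x3^2) mod 4 = 1 \<longrightarrow> odd x0 \<and> even x1 \<and> even x2 \<and> even x3) \<and>
     ((x0^2 + x1^2 + x2^2 + x3^2) mod 4 = 3 \<longrightarrow> even x1 \<and> odd x0 \<and> odd x2 \<and> odd x3)
   \<longleftrightarrow> admissible_parity (x0, x1, x2, x3)"
proof -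
  let ?e = "\<lambda>x::int. if even x then 0 else 1 :: int"
  have "[x0^2 + x1^2 + x2^2 + x3^2 = ?e x0 + ?e x1 + ?e x2 + ?e x3] (mod 4)"
    by (intro cong_add power2_cong_mod4)
  then have "(x0^2 + x1^2 + x2^2 + x3^2) mod 4 = (?e x0 + ?e x1 + ?e x2 + ?e x3) mod 4"
    by (simp only: cong_def)
  moreover have "odd x0 \<or> odd x1 \<or> odd x2 \<or> odd x3" using assms by auto
  ultimately show ?thesis using assms by (simp add: admissible_parity_def split: if_splits)
qed

lemma Gamma_tilde_iff:
  assumes "odd p" "odd l"
  shows "x \<in> Gamma_tilde p l \<longleftrightarrow>
    (\<exists>r s::nat. qnorm x = int p ^ r * int l ^ s) \<and> admissible_parity x"
proof -
  obtain x0 x1 x2 x3 where x: "x = (x0, x1, x2, x3)" by (cases x)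
  show ?thesis
  proof (cases "\<exists>r s::nat. x0^2 + x1^2 + x2^2 + x3^2 = int p ^ r * int l ^ s")
    case True
    then obtain r s where "x0^2 + x1^2 + x2^2 + x3^2 = int p ^ r * int l ^ s" by blast
    then have "odd (x0^2 + x1^2 + x2^2 + x3^2)" using assms by simp
    then show ?thesis
      using True sum_squares_mod4_conditions_iff by (simp add: x Gamma_tilde_def qnorm_def)
  next
    case False
    then show ?thesis by (simp add: x Gamma_tilde_def qnorm_def)
  qed
qed

lemma admissible_parity_qmul:
  "admissible_parity x \<Longrightarrow> admissible_parity y \<Longrightarrow> admissible_parity (qmul x y)"
  by (cases x; cases y) (auto simp: admissible_parity_def qmul_def)

lemma admissible_parity_qconj: "admissible_parity x \<Longrightarrow> admissible_parity (qconj x)"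
  by (cases x) (auto simp: admissible_parity_def qconj_def)

lemma Gamma_tilde_qmul:
  assumes "odd p" "odd l" "x \<in> Gamma_tilde p l" "y \<in> Gamma_tilde p l"
  shows "qmul x y \<in> Gamma_tilde p l"
proof -
  obtain r s r' s' where "qnorm x = int p ^ r * int l ^ s" "qnorm y = int p ^ r' * int l ^ s'"
    "admissible_parity x" "admissible_parity y"
    using assms Gamma_tilde_iff by metis
  then have "qnorm (qmul x y) = int p ^ (r + r') * int l ^ (s + s')"
    "admissible_parity (qmul x y)"
    by (simp_all add: qnorm_qmul power_add admissible_parity_qmul mult_ac)
  then show ?thesis using Gamma_tilde_iff assms(1,2) by blast
qed

lemma Gamma_tilde_qconj:
  "odd p \<Longrightarrow> odd l \<Longrightarrow> x \<in> Gamma_tilde p l \<Longrightarrow> qconj x \<in> Gamma_tilde p l"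
  using Gamma_tilde_iff qnorm_qconj admissible_parity_qconj by metis

lemma Gamma_tilde_one: "odd p \<Longrightarrow> odd l \<Longrightarrow> (1, 0, 0, 0) \<in> Gamma_tilde p l"
  by (subst Gamma_tilde_iff) (auto simp: qnorm_def admissible_parity_def intro!: exI[of _ 0])

lemma Gamma_tilde_odd_real_part:
  "odd p \<Longrightarrow> odd l \<Longrightarrow> x \<in> Gamma_tilde p l \<Longrightarrow> odd (fst x)"
  by (cases x) (auto simp: Gamma_tilde_iff admissible_parity_def)

lemma Gamma_tilde_qnorm_nonzero:
  "odd p \<Longrightarrow> odd l \<Longrightarrow> x \<in> Gamma_tilde p l \<Longrightarrow> qnorm x \<noteq> 0"
  by (auto simp: Gamma_tilde_iff)

lemma carrier_GammaGrp: "carrier (GammaGrp p l cp dp cl dl) = psi cp dp cl dl ` Gamma_tilde p l"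
  by (simp add: GammaGrp_def Gamma_def)

lemma mult_GammaGrp: "a \<otimes>\<^bsub>GammaGrp p l cp dp cl dl\<^esub> b = a \<otimes>\<^bsub>Gpl\<^esub> b"
  by (simp add: GammaGrp_def)

lemma one_GammaGrp: "\<one>\<^bsub>GammaGrp p l cp dp cl dl\<^esub> = \<one>\<^bsub>Gpl\<^esub>"
  by (simp add: GammaGrp_def)

lemma psi_qmul:
  fixes cp dp :: "'a::field" and cl dl :: "'b::field"
  assumes "cp^2 + dp^2 + 1 = 0" "cl^2 + dl^2 + 1 = 0"
  shows "psi cp dp cl dl x \<otimes>\<^bsub>Gpl\<^esub> psi cp dp cl dl y = psi cp dp cl dl (qmul x y)"
  by (simp add: psi_def Gpl_def PGL2_def pgl_class_mult
      qmat_qmul[OF assms(1)] qmat_qmul[OF assms(2)])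

lemma psi_scalar:
  fixes cp dp :: "'a::field_char_0" and cl dl :: "'b::field_char_0"
  assumes "n \<noteq> 0"
  shows "psi cp dp cl dl (n, 0, 0, 0) = \<one>\<^bsub>Gpl\<^esub>"
  using assms by (simp add: psi_def Gpl_def PGL2_def qmat_scalar pgl_class_scale_mat)

lemma group_GammaGrp:
  fixes cp dp :: "'a::field_char_0" and cl dl :: "'b::field_char_0"
  assumes "odd p" "odd l" "cp^2 + dp^2 + 1 = 0" "cl^2 + dl^2 + 1 = 0"
  shows "group (GammaGrp p l cp dp cl dl)"
proof -
  let ?G = "GammaGrp p l cp dp cl dl" and ?psi = "psi cp dp cl dl"
  have mult: "?psi x \<otimes>\<^bsub>?G\<^esub> ?psi y = ?psi (qmul x y)" for x y
    by (simp add: mult_GammaGrp psi_qmul assms(3,4))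
  have one: "\<one>\<^bsub>?G\<^esub> = ?psi (1, 0, 0, 0)"
    by (simp add: one_GammaGrp psi_scalar)
  show ?thesis
  proof (rule groupI)
    fix a assume "a \<in> carrier ?G"
    then obtain x where x: "x \<in> Gamma_tilde p l" "a = ?psi x" by (auto simp: carrier_GammaGrp)
    have "?psi (qconj x) \<otimes>\<^bsub>?G\<^esub> a = \<one>\<^bsub>?G\<^esub>"
      using Gamma_tilde_qnorm_nonzero[OF assms(1,2) x(1)]
      by (simp add: x(2) mult qmul_qconj_left one_GammaGrp psi_scalar)
    moreover have "?psi (qconj x) \<in> carrier ?G"
      using Gamma_tilde_qconj[OF assms(1,2) x(1)] by (simp add: carrier_GammaGrp)
    ultimately show "\<exists>b\<in>carrier ?G. b \<otimes>\<^bsub>?G\<^esub> a = \<one>\<^bsub>?G\<^esub>" by blast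
  qed (auto simp: carrier_GammaGrp mult one qmul_assoc qmul_one_left
      Gamma_tilde_one[OF assms(1,2)] Gamma_tilde_qmul[OF assms(1,2)])
qed

lemma GammaGrp_commute_imp_qmul_commute:
  fixes cp dp :: "'a::field_char_0" and cl dl :: "'b::field_char_0"
  assumes pl: "odd p" "odd l" and cd: "cp^2 + dp^2 + 1 = 0" "cl^2 + dl^2 + 1 = 0"
    and xy: "x \<in> Gamma_tilde p l" "y \<in> Gamma_tilde p l"
    and commute: "psi cp dp cl dl x \<otimes>\<^bsub>GammaGrp p l cp dp cl dl\<^esub> psi cp dp cl dl y =
      psi cp dp cl dl y \<otimes>\<^bsub>GammaGrp p l cp dp cl dl\<^esub> psi cp dp cl dl x"
  shows "qmul x y = qmul y x"
proof (rule qmul_commute_of_pgl_class_eq[OF cd(1)])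
  show "qnorm x \<noteq> 0" "qnorm y \<noteq> 0"
    using xy Gamma_tilde_qnorm_nonzero[OF pl] by blast+
  show "fst y \<noteq> 0"
    using Gamma_tilde_odd_real_part[OF pl xy(2)] by auto
  have "psi cp dp cl dl (qmul x y) = psi cp dp cl dl (qmul y x)"
    using commute by (simp add: mult_GammaGrp psi_qmul cd)
  then show "pgl_class (qmat cp dp (qmul x y)) = pgl_class (qmat cp dp (qmul y x))"
    by (simp add: psi_def)
qed

lemma GammaGrp_centralizer_abelian:
  fixes cp dp :: "'a::field_char_0" and cl dl :: "'b::field_char_0"
  assumes pl: "odd p" "odd l" and cd: "cp^2 + dp^2 + 1 = 0" "cl^2 + dl^2 + 1 = 0"
    and g: "g \<in> carrier (GammaGrp p l cp dp cl dl)" "g \<noteq> \<one>\<^bsub>GammaGrp p l cp dp cl dl\<^esub>"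
  shows "abelian_subgroup (centralizer (GammaGrp p l cp dp cl dl) g) (GammaGrp p l cp dp cl dl)"
proof -
  let ?G = "GammaGrp p l cp dp cl dl" and ?psi = "psi cp dp cl dl"
  have mult: "?psi x \<otimes>\<^bsub>?G\<^esub> ?psi y = ?psi (qmul x y)" for x y
    by (simp add: mult_GammaGrp psi_qmul cd)
  obtain x0 x1 x2 x3 where x: "(x0, x1, x2, x3) \<in> Gamma_tilde p l" "g = ?psi (x0, x1, x2, x3)"
    using g(1) by (auto simp: carrier_GammaGrp)
  have "(x1, x2, x3) \<noteq> (0, 0, 0)"
    using g(2) x psi_scalar[of x0] Gamma_tilde_odd_real_part[OF pl x(1)]
    by (auto simp: one_GammaGrp)
  have "a \<otimes>\<^bsub>?G\<^esub> b = b \<otimes>\<^bsub>?G\<^esub> a"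
    if a: "a \<in> centralizer ?G g" and b: "b \<in> centralizer ?G g" for a b
  proof -
    obtain y where y: "y \<in> Gamma_tilde p l" "a = ?psi y"
      using a by (auto simp: centralizer_def carrier_GammaGrp)
    obtain z where z: "z \<in> Gamma_tilde p l" "b = ?psi z"
      using b by (auto simp: centralizer_def carrier_GammaGrp)
    have "qmul (x0, x1, x2, x3) y = qmul y (x0, x1, x2, x3)"
      using a x y by (intro GammaGrp_commute_imp_qmul_commute[OF pl cd])
        (simp_all add: centralizer_def)
    moreover have "qmul (x0, x1, x2, x3) z = qmul z (x0, x1, x2, x3)"
      using b x z by (intro GammaGrp_commute_imp_qmul_commute[OF pl cd])
        (simp_all add: centralizer_def)
    ultimately have "qmul y z = qmul z y"
      using qmul_commute_trans[OF \<open>(x1, x2, x3) \<noteq> (0, 0, 0)\<close>] by blast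
    then show ?thesis by (simp add: y(2) z(2) mult)
  qed
  then show ?thesis
    using group.subgroup_centralizer[OF group_GammaGrp[OF pl cd] g(1)]
    by (simp add: abelian_subgroup_def)
qed

theorem lemma2p4:
  fixes p l :: nat
    and cp dp :: "'a::field_char_0" and cl dl :: "'b::field_char_0"
    and \<Gamma>1 \<Gamma>2 :: "(('a ^ 2 ^ 2) set \<times> ('b ^ 2 ^ 2) set) set"
  assumes "prime p" and "prime l" and "odd p" and "odd l" and "p \<noteq> l"
    and "cp^2 + dp^2 + 1 = 0" and "cl^2 + dl^2 + 1 = 0"
    and "maximal_abelian_subgroup \<Gamma>1 (GammaGrp p l cp dp cl dl)"
    and "maximal_abelian_subgroup \<Gamma>2 (GammaGrp p l cp dp cl dl)"
    and "\<Gamma>1 \<noteq> \<Gamma>2"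
  shows "\<Gamma>1 \<inter> \<Gamma>2 = {\<one>\<^bsub>GammaGrp p l cp dp cl dl\<^esub>}"
proof -
  interpret group "GammaGrp p l cp dp cl dl"
    using group_GammaGrp assms(3,4,6,7) .
  show ?thesis
    using maximal_abelian_subgroups_inter_trivial GammaGrp_centralizer_abelian assms(3,4,6-10)
    by blast
qed

end
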